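(* Let $X$ and $Y$ be nontrivial real Banach spaces. (a) If $X^*$ has the weak$^*$ strong diameter $2$ property, then $(X\oplus_1 Y)^*$ has the weak$^*$ strong diameter $2$ property. (b) If $1<p<\infty$, then $(X\oplus_p Y)^*$ does not have the weak$^*$ strong diameter $2$ property. (c) If $X^*$ and $Y^*$ have the weak$^*$ strong diameter $2$ property, then $(X\oplus_\infty Y)^*$ has the weak$^*$ strong diameter $2$ property. (d) If $(X\oplus_\infty Y)^*$ has the weak$^*$ strong diameter $2$ property, then $X^*$ has the weak$^*$ strong diameter $2$ property.
   Context: For $1\le p<\infty$, $X\oplus_p Y$ is $X\times Y$ with norm $(\|x\|^p+\|y\|^p)^{1/p}$; $X\oplus_\infty Y$ has norm $\max\{\|x\|,\|y\|\}$. For a Banach space $Z$, a weak$^*$ slice of $B_{Z^*}$ is a set $\{z^*\in B_{Z^*}: z^*(z)>1-\alpha\}$ with $z\in S_Z$, $\alpha>0$; $Z^*$ has the weak$^*$ strong diameter $2$ property if every convex combination $\sum_{i=1}^n\lambda_iS_i$ ($n\in\mathbb{N}$, $\lambda_i\geq0$, $\sum\lambda_i=1$, $S_i$ weak$^*$ slices of $B_{Z^*}$) has diameter $2$. *)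

theory Defs
  imports "HOL-Analysis.Analysis"
begin

text \<open>We work with a real vector space Z carrying a norm N (given as a function).
  This lets us treat X (with its own norm) and X \<times> Y with the p-sum norms uniformly.
  The dual Z* is the space of N-bounded linear functionals Z \<Rightarrow> real with the dual norm.\<close>

definition dual_norm :: "('z::real_vector \<Rightarrow> real) \<Rightarrow> ('z \<Rightarrow> real) \<Rightarrow> real" where
  "dual_norm N f = Sup {\<bar>f z\<bar> | z. N z \<le> 1}"

definition dual_ball :: "('z::real_vector \<Rightarrow> real) \<Rightarrow> ('z \<Rightarrow> real) set" where
  "dual_ball N = {f. linear f \<and> (\<exists>C. \<forall>z. \<bar>f z\<bar> \<le> C * N z) \<and> dual_norm N f \<le> 1}"

definition wstar_slice :: "('z::real_vector \<Rightarrow> real) \<Rightarrow> 'z \<Rightarrow> real \<Rightarrow> ('z \<Rightarrow> real) set" where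
  "wstar_slice N z \<alpha> = {f \<in> dual_ball N. f z > 1 - \<alpha>}"

definition comb_sets :: "nat \<Rightarrow> (nat \<Rightarrow> real) \<Rightarrow> (nat \<Rightarrow> ('z::real_vector \<Rightarrow> real) set)
    \<Rightarrow> ('z \<Rightarrow> real) set" where
  "comb_sets n c S = {(\<lambda>z. \<Sum>i<n. c i * f i z) | f. \<forall>i<n. f i \<in> S i}"

definition dual_diam :: "('z::real_vector \<Rightarrow> real) \<Rightarrow> ('z \<Rightarrow> real) set \<Rightarrow> real" where
  "dual_diam N A = Sup {dual_norm N (\<lambda>z. g z - h z) | g h. g \<in> A \<and> h \<in> A}"

definition wstar_SD2P :: "('z::real_vector \<Rightarrow> real) \<Rightarrow> bool" where
  "wstar_SD2P N \<longleftrightarrow>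
     (\<forall>n::nat. \<forall>c zs \<alpha>s. n \<ge> 1 \<and> (\<forall>i<n. c i \<ge> 0) \<and> (\<Sum>i<n. c i) = 1
        \<and> (\<forall>i<n. N (zs i) = 1 \<and> \<alpha>s i > 0)
        \<longrightarrow> dual_diam N (comb_sets n c (\<lambda>i. wstar_slice N (zs i) (\<alpha>s i))) = 2)"

definition norm_sum1 :: "('a::real_normed_vector \<times> 'b::real_normed_vector) \<Rightarrow> real" where
  "norm_sum1 w = norm (fst w) + norm (snd w)"

definition norm_sump :: "real \<Rightarrow> ('a::real_normed_vector \<times> 'b::real_normed_vector) \<Rightarrow> real" where
  "norm_sump p w = (norm (fst w) powr p + norm (snd w) powr p) powr (1 / p)"

definition norm_suminf :: "('a::real_normed_vector \<times> 'b::real_normed_vector) \<Rightarrow> real" where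
  "norm_suminf w = max (norm (fst w)) (norm (snd w))"

end

theory Submission
  imports Defs
begin

text \<open>Everything goes through a characterisation of the weak* strong diameter 2 property:
  Z* has it iff for every convex combination of weak* slices and every \<delta> > 0 the combination
  contains two functionals differing by more than 2 - \<delta> at some point of the unit ball of Z.
  Slices of the dual ball of a normed space are nonempty by the Hahn--Banach theorem.

  For the 1-sum, witnesses in X* are extended to X \<times> Y by a norming functional of the second
  coordinate of the centre of each slice. For the \<infinity>-sum, each slice is treated in a factor in
  which its centre has a coordinate of norm 1. Conversely, the functionals in thin slices of the dual
  of the \<infinity>-sum centred at points (x, 0) almost vanish on Y, so their restrictions to X are
  witnesses for X*. For 1 < p < \<infinity>, functionals in thin slices around (x, 0) and (0, y) are
  almost supported on one factor each, so the average of these two slices has diameter at most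
  (1 + \<epsilon>)(1 + 2 powr (-1/p)) < 2.\<close>

section \<open>Dual norms\<close>

definition homogeneous_gauge :: "('z::real_vector \<Rightarrow> real) \<Rightarrow> bool" where
  "homogeneous_gauge N \<longleftrightarrow> (\<forall>c z. N (c *\<^sub>R z) = \<bar>c\<bar> * N z) \<and> (\<forall>z. 0 \<le> N z)"

lemma homogeneous_gauge_zero: "homogeneous_gauge N \<Longrightarrow> N 0 = 0"
  unfolding homogeneous_gauge_def by (metis abs_zero mult_zero_left scale_zero_left)

lemma homogeneous_gauge_minus: "homogeneous_gauge N \<Longrightarrow> N (- z) = N z"
  unfolding homogeneous_gauge_def using scaleR_minus1_left by (metis abs_neg_one mult_1)

lemma homogeneous_gauge_norm: "homogeneous_gauge norm"
  unfolding homogeneous_gauge_def by simp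

lemma homogeneous_gauge_norm_sum1: "homogeneous_gauge norm_sum1"
  unfolding homogeneous_gauge_def norm_sum1_def by (simp add: distrib_left)

lemma homogeneous_gauge_norm_suminf: "homogeneous_gauge norm_suminf"
  unfolding homogeneous_gauge_def norm_suminf_def
  by (simp add: max_mult_distrib_left le_max_iff_disj)

lemma homogeneous_gauge_norm_sump:
  assumes "p > 0"
  shows "homogeneous_gauge (norm_sump p)"
  unfolding homogeneous_gauge_def
proof (intro conjI allI)
  fix c :: real and z :: "'a \<times> 'b"
  have "norm (fst (c *\<^sub>R z)) powr p + norm (snd (c *\<^sub>R z)) powr p
      = \<bar>c\<bar> powr p * (norm (fst z) powr p + norm (snd z) powr p)"
    by (simp add: powr_mult distrib_left)
  then show "norm_sump p (c *\<^sub>R z) = \<bar>c\<bar> * norm_sump p z"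
    unfolding norm_sump_def using assms by (simp add: powr_mult powr_powr)
qed (simp add: norm_sump_def)

lemma dual_norm_set_bdd_above:
  assumes N: "homogeneous_gauge N" and C: "\<And>z. \<bar>f z\<bar> \<le> C * N z"
  shows "bdd_above {\<bar>f z\<bar> | z. N z \<le> 1}"
proof (rule bdd_aboveI)
  fix s assume "s \<in> {\<bar>f z\<bar> | z. N z \<le> 1}"
  then obtain z where z: "s = \<bar>f z\<bar>" "N z \<le> 1" by blast
  have "\<bar>f z\<bar> \<le> max C 0 * N z"
    using C[of z] N unfolding homogeneous_gauge_def by (smt (verit) mult_right_mono max.cobounded1)
  also have "\<dots> \<le> max C 0" using z(2) by (simp add: mult_left_le)
  finally show "s \<le> max C 0" using z(1) by simp
qed

lemma abs_le_dual_norm: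
  assumes "homogeneous_gauge N" "\<And>z. \<bar>f z\<bar> \<le> C * N z" "N z \<le> 1"
  shows "\<bar>f z\<bar> \<le> dual_norm N f"
  unfolding dual_norm_def
  using assms by (auto intro!: cSup_upper dual_norm_set_bdd_above)

lemma dual_norm_set_nonempty:
  assumes "homogeneous_gauge N"
  shows "{\<bar>f z\<bar> | z. N z \<le> 1} \<noteq> {}"
proof -
  have "\<bar>f 0\<bar> \<in> {\<bar>f z\<bar> | z. N z \<le> 1}" using homogeneous_gauge_zero[OF assms] by auto
  then show ?thesis by blast
qed

lemma dual_norm_le:
  assumes N: "homogeneous_gauge N" and B: "\<And>z. N z \<le> 1 \<Longrightarrow> \<bar>f z\<bar> \<le> B"
  shows "dual_norm N f \<le> B"
  unfolding dual_norm_def by (rule cSup_least[OF dual_norm_set_nonempty[OF N]]) (use B in blast)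

lemma abs_le_dual_norm_mult:
  assumes N: "homogeneous_gauge N" and lin: "linear f" and C: "\<And>z. \<bar>f z\<bar> \<le> C * N z"
  shows "\<bar>f z\<bar> \<le> dual_norm N f * N z"
proof (cases "N z = 0")
  case True
  then show ?thesis using C[of z] by simp
next
  case False
  then have pos: "N z > 0" using N unfolding homogeneous_gauge_def by (simp add: order_less_le)
  have "N ((1 / N z) *\<^sub>R z) = 1" using N pos unfolding homogeneous_gauge_def by simp
  then have "\<bar>f ((1 / N z) *\<^sub>R z)\<bar> \<le> dual_norm N f" by (intro abs_le_dual_norm[OF N C]) simp
  then show ?thesis using pos by (simp add: linear_scale[OF lin] divide_le_eq)
qed

lemma less_dual_norm_iff:
  assumes N: "homogeneous_gauge N" and lin: "linear f" and C: "\<And>z. \<bar>f z\<bar> \<le> C * N z"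
  shows "r < dual_norm N f \<longleftrightarrow> (\<exists>z. N z \<le> 1 \<and> r < f z)"
proof
  assume "r < dual_norm N f"
  then obtain z where z: "N z \<le> 1" "r < \<bar>f z\<bar>"
    unfolding dual_norm_def
    using less_cSup_iff[OF dual_norm_set_nonempty[OF N] dual_norm_set_bdd_above[OF N C]] by blast
  show "\<exists>z. N z \<le> 1 \<and> r < f z"
  proof (cases "0 \<le> f z")
    case False
    then show ?thesis
      using z homogeneous_gauge_minus[OF N, of z] linear_neg[OF lin, of z]
      by (intro exI[of _ "- z"]) auto
  qed (use z in auto)
next
  assume "\<exists>z. N z \<le> 1 \<and> r < f z"
  then show "r < dual_norm N f" using abs_le_dual_norm[OF N C] by force
qed

lemma dual_ball_iff:
  assumes N: "homogeneous_gauge N"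
  shows "f \<in> dual_ball N \<longleftrightarrow> linear f \<and> (\<forall>z. \<bar>f z\<bar> \<le> N z)"
proof
  assume "f \<in> dual_ball N"
  then obtain C where lin: "linear f" and C: "\<And>z. \<bar>f z\<bar> \<le> C * N z" and "dual_norm N f \<le> 1"
    unfolding dual_ball_def by blast
  then have "dual_norm N f * N z \<le> N z" for z
    using N mult_right_mono[of "dual_norm N f" 1 "N z"] unfolding homogeneous_gauge_def by simp
  then show "linear f \<and> (\<forall>z. \<bar>f z\<bar> \<le> N z)"
    using lin abs_le_dual_norm_mult[OF N lin C] order_trans by blast
next
  assume f: "linear f \<and> (\<forall>z. \<bar>f z\<bar> \<le> N z)"
  then have "dual_norm N f \<le> 1" by (intro dual_norm_le[OF N]) (meson order_trans)
  then show "f \<in> dual_ball N" using f unfolding dual_ball_def by (auto intro!: exI[of _ 1])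
qed

lemma wstar_slice_iff:
  "homogeneous_gauge N \<Longrightarrow>
    f \<in> wstar_slice N z \<alpha> \<longleftrightarrow> linear f \<and> (\<forall>w. \<bar>f w\<bar> \<le> N w) \<and> 1 - \<alpha> < f z"
  unfolding wstar_slice_def using dual_ball_iff by blast

lemma wstar_slice_mono: "\<alpha> \<le> \<beta> \<Longrightarrow> wstar_slice N z \<alpha> \<subseteq> wstar_slice N z \<beta>"
  unfolding wstar_slice_def by auto

lemma convex_comb_diff_in_double_ball:
  assumes N: "homogeneous_gauge N" and c: "\<forall>i<n. 0 \<le> c i" "(\<Sum>i<n. c i) = 1"
    and fg: "\<forall>i<n. f i \<in> dual_ball N \<and> g i \<in> dual_ball N"
  shows "linear (\<lambda>z. \<Sum>i<n. c i * (f i z - g i z))"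
    and "\<bar>\<Sum>i<n. c i * (f i z - g i z)\<bar> \<le> 2 * N z"
proof -
  have lin: "linear (f i)" "linear (g i)" and bd: "\<bar>f i z\<bar> \<le> N z" "\<bar>g i z\<bar> \<le> N z"
    if "i < n" for i
    using fg that dual_ball_iff[OF N] by blast+
  have "linear (\<lambda>z. c i * (f i z - g i z))" if "i < n" for i
    using linear_compose_scale_right[OF linear_compose_sub[OF lin[OF that]], of "c i"] by simp
  then show "linear (\<lambda>z. \<Sum>i<n. c i * (f i z - g i z))"
    by (intro linear_compose_sum) simp
  have "\<bar>\<Sum>i<n. c i * (f i z - g i z)\<bar> \<le> (\<Sum>i<n. \<bar>c i * (f i z - g i z)\<bar>)"
    by (rule sum_abs)
  also have "\<dots> \<le> (\<Sum>i<n. c i * (2 * N z))"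
  proof (rule sum_mono)
    fix i assume "i \<in> {..<n}"
    then have "\<bar>f i z - g i z\<bar> \<le> 2 * N z" "0 \<le> c i" using bd[of i] c(1) by auto
    then show "\<bar>c i * (f i z - g i z)\<bar> \<le> c i * (2 * N z)" by (simp add: abs_mult mult_left_mono)
  qed
  also have "\<dots> = 2 * N z" using c by (simp add: sum_distrib_right[symmetric])
  finally show "\<bar>\<Sum>i<n. c i * (f i z - g i z)\<bar> \<le> 2 * N z" .
qed

lemma convex_sum_le:
  assumes "\<forall>i<n. 0 \<le> c i" "(\<Sum>i<n. c i) = 1" "\<forall>i<n. a i \<le> (B::real)"
  shows "(\<Sum>i<n. c i * a i) \<le> B"
proof -
  have "(\<Sum>i<n. c i * a i) \<le> (\<Sum>i<n. c i * B)"
    using assms(1,3) by (intro sum_mono) (simp add: mult_left_mono)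
  also have "\<dots> = B" using assms(2) by (simp add: sum_distrib_right[symmetric])
  finally show ?thesis .
qed

section \<open>Characterising the weak* strong diameter 2 property\<close>

lemma cSup_eq_iff_approx:
  fixes D :: "real set"
  assumes "D \<noteq> {}" "\<And>d. d \<in> D \<Longrightarrow> d \<le> a"
  shows "Sup D = a \<longleftrightarrow> (\<forall>\<delta>>0. \<exists>d\<in>D. a - \<delta> < d)"
proof
  assume "Sup D = a"
  moreover have "bdd_above D" using assms(2) by (rule bdd_aboveI)
  ultimately show "\<forall>\<delta>>0. \<exists>d\<in>D. a - \<delta> < d"
    using less_cSup_iff[OF assms(1) \<open>bdd_above D\<close>, of "a - _"] by simp
next
  assume approx: "\<forall>\<delta>>0. \<exists>d\<in>D. a - \<delta> < d"
  show "Sup D = a"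
  proof (rule cSup_eq_non_empty)
    fix y assume "\<And>d. d \<in> D \<Longrightarrow> d \<le> y"
    then show "a \<le> y" using approx[rule_format, of "a - y"] by force
  qed (use assms in auto)
qed

lemma dual_diam_comb_sets:
  "dual_diam N (comb_sets n c S) = Sup {dual_norm N (\<lambda>z. \<Sum>i<n. c i * (f i z - g i z)) | f g.
     \<forall>i<n. f i \<in> S i \<and> g i \<in> S i}"
  unfolding dual_diam_def
proof (rule arg_cong[where f = Sup], intro equalityI subsetI)
  have diff_eq: "(\<lambda>z. (\<Sum>i<n. c i * f i z) - (\<Sum>i<n. c i * g i z))
      = (\<lambda>z. \<Sum>i<n. c i * (f i z - g i z))" for f g :: "nat \<Rightarrow> 'a \<Rightarrow> real"
    by (simp add: sum_subtractf right_diff_distrib)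
  fix d
  assume "d \<in> {dual_norm N (\<lambda>z. G z - H z) | G H. G \<in> comb_sets n c S \<and> H \<in> comb_sets n c S}"
  then obtain f g where "d = dual_norm N (\<lambda>z. (\<Sum>i<n. c i * f i z) - (\<Sum>i<n. c i * g i z))"
    and "\<forall>i<n. f i \<in> S i \<and> g i \<in> S i" unfolding comb_sets_def by blast
  then show "d \<in> {dual_norm N (\<lambda>z. \<Sum>i<n. c i * (f i z - g i z)) | f g. \<forall>i<n. f i \<in> S i \<and> g i \<in> S i}"
    unfolding diff_eq by blast
next
  fix d assume "d \<in> {dual_norm N (\<lambda>z. \<Sum>i<n. c i * (f i z - g i z)) | f g. \<forall>i<n. f i \<in> S i \<and> g i \<in> S i}"
  then obtain f g where d: "d = dual_norm N (\<lambda>z. (\<Sum>i<n. c i * f i z) - (\<Sum>i<n. c i * g i z))"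
    and fg: "\<forall>i<n. f i \<in> S i \<and> g i \<in> S i" by (auto simp: sum_subtractf right_diff_distrib)
  have "(\<lambda>z. \<Sum>i<n. c i * f i z) \<in> comb_sets n c S" "(\<lambda>z. \<Sum>i<n. c i * g i z) \<in> comb_sets n c S"
    unfolding comb_sets_def using fg by blast+
  then show "d \<in> {dual_norm N (\<lambda>z. G z - H z) | G H. G \<in> comb_sets n c S \<and> H \<in> comb_sets n c S}"
    unfolding d by (intro CollectI exI[of _ "\<lambda>z. \<Sum>i<n. c i * f i z"]
        exI[of _ "\<lambda>z. \<Sum>i<n. c i * g i z"]) simp
qed

lemma dual_diam_comb_sets_eq_2_iff:
  assumes N: "homogeneous_gauge N" and c: "\<forall>i<n. 0 \<le> c i" "(\<Sum>i<n. c i) = 1"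
    and S: "\<forall>i<n. S i \<subseteq> dual_ball N" "\<forall>i<n. S i \<noteq> {}"
  shows "dual_diam N (comb_sets n c S) = 2 \<longleftrightarrow>
    (\<forall>\<delta>>0. \<exists>f g z. (\<forall>i<n. f i \<in> S i \<and> g i \<in> S i) \<and> N z \<le> 1
       \<and> 2 - \<delta> < (\<Sum>i<n. c i * (f i z - g i z)))"
proof -
  define \<phi> where "\<phi> f g = (\<lambda>z. \<Sum>i<n. c i * (f i z - g i z))" for f g :: "nat \<Rightarrow> 'a \<Rightarrow> real"
  define D where "D = {dual_norm N (\<phi> f g) | f g. \<forall>i<n. f i \<in> S i \<and> g i \<in> S i}"
  have lin: "linear (\<phi> f g)" and bd: "\<And>z. \<bar>\<phi> f g z\<bar> \<le> 2 * N z"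
    if "\<forall>i<n. f i \<in> S i \<and> g i \<in> S i" for f g
    unfolding \<phi>_def using convex_comb_diff_in_double_ball[OF N c, of f g] that S(1) by blast+
  define f0 where "f0 i = (SOME x. x \<in> S i)" for i
  have "\<forall>i<n. f0 i \<in> S i" using S(2) unfolding f0_def by (simp add: some_in_eq)
  then have "D \<noteq> {}" unfolding D_def by blast
  moreover have "d \<le> 2" if "d \<in> D" for d
  proof -
    obtain f g where fg: "\<forall>i<n. f i \<in> S i \<and> g i \<in> S i" and d: "d = dual_norm N (\<phi> f g)"
      using \<open>d \<in> D\<close> unfolding D_def by blast
    have "\<bar>\<phi> f g z\<bar> \<le> 2" if "N z \<le> 1" for z
      using bd[OF fg, of z] that by linarith
    then show ?thesis unfolding d by (rule dual_norm_le[OF N])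
  qed
  ultimately have "Sup D = 2 \<longleftrightarrow> (\<forall>\<delta>>0. \<exists>d\<in>D. 2 - \<delta> < d)"
    by (rule cSup_eq_iff_approx)
  moreover have "(\<exists>d\<in>D. r < d) \<longleftrightarrow>
      (\<exists>f g z. (\<forall>i<n. f i \<in> S i \<and> g i \<in> S i) \<and> N z \<le> 1 \<and> r < \<phi> f g z)" for r
  proof -
    have "r < dual_norm N (\<phi> f g) \<longleftrightarrow> (\<exists>z. N z \<le> 1 \<and> r < \<phi> f g z)"
      if "\<forall>i<n. f i \<in> S i \<and> g i \<in> S i" for f g
      using less_dual_norm_iff[OF N lin[OF that] bd[OF that]] .
    then show ?thesis unfolding D_def by blast
  qed
  ultimately have "Sup D = 2 \<longleftrightarrow>
    (\<forall>\<delta>>0. \<exists>f g z. (\<forall>i<n. f i \<in> S i \<and> g i \<in> S i) \<and> N z \<le> 1 \<and> 2 - \<delta> < \<phi> f g z)"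
    by simp
  then show ?thesis unfolding dual_diam_comb_sets D_def \<phi>_def .
qed

definition convex_slice_data ::
    "('z::real_vector \<Rightarrow> real) \<Rightarrow> nat \<Rightarrow> (nat \<Rightarrow> real) \<Rightarrow> (nat \<Rightarrow> 'z) \<Rightarrow> (nat \<Rightarrow> real) \<Rightarrow> bool" where
  "convex_slice_data N n c zs \<alpha>s \<longleftrightarrow>
     1 \<le> n \<and> (\<forall>i<n. 0 \<le> c i) \<and> (\<Sum>i<n. c i) = 1 \<and> (\<forall>i<n. N (zs i) = 1 \<and> 0 < \<alpha>s i)"

lemma wstar_SD2P_intro:
  assumes N: "homogeneous_gauge N"
    and witness: "\<And>n c zs \<alpha>s \<delta>. convex_slice_data N n c zs \<alpha>s \<Longrightarrow> 0 < \<delta> \<Longrightarrow>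
      \<exists>f g z. (\<forall>i<n. f i \<in> wstar_slice N (zs i) (\<alpha>s i) \<and> g i \<in> wstar_slice N (zs i) (\<alpha>s i))
        \<and> N z \<le> 1 \<and> 2 - \<delta> < (\<Sum>i<n. c i * (f i z - g i z))"
  shows "wstar_SD2P N"
  unfolding wstar_SD2P_def
proof (intro allI impI)
  fix n :: nat and c :: "nat \<Rightarrow> real" and zs and \<alpha>s :: "nat \<Rightarrow> real"
  assume "1 \<le> n \<and> (\<forall>i<n. 0 \<le> c i) \<and> (\<Sum>i<n. c i) = 1 \<and> (\<forall>i<n. N (zs i) = 1 \<and> 0 < \<alpha>s i)"
  then have data: "convex_slice_data N n c zs \<alpha>s" and c: "\<forall>i<n. 0 \<le> c i" "(\<Sum>i<n. c i) = 1"
    unfolding convex_slice_data_def by auto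
  have "\<forall>i<n. wstar_slice N (zs i) (\<alpha>s i) \<noteq> {}"
    using witness[OF data, of 1] by force
  then show "dual_diam N (comb_sets n c (\<lambda>i. wstar_slice N (zs i) (\<alpha>s i))) = 2"
    using dual_diam_comb_sets_eq_2_iff[OF N c] witness[OF data]
    unfolding wstar_slice_def by auto
qed

lemma wstar_SD2P_witnesses:
  assumes "wstar_SD2P N" and N: "homogeneous_gauge N" and data: "convex_slice_data N n c zs \<alpha>s"
    and nonempty: "\<forall>i<n. wstar_slice N (zs i) (\<alpha>s i) \<noteq> {}" and "0 < \<delta>"
  obtains f g z where "\<forall>i<n. f i \<in> wstar_slice N (zs i) (\<alpha>s i) \<and> g i \<in> wstar_slice N (zs i) (\<alpha>s i)"
    and "N z \<le> 1" and "2 - \<delta> < (\<Sum>i<n. c i * (f i z - g i z))"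
proof -
  have c: "\<forall>i<n. 0 \<le> c i" "(\<Sum>i<n. c i) = 1" using data unfolding convex_slice_data_def by auto
  have "dual_diam N (comb_sets n c (\<lambda>i. wstar_slice N (zs i) (\<alpha>s i))) = 2"
    using assms(1) data unfolding wstar_SD2P_def convex_slice_data_def by blast
  then show ?thesis
    using dual_diam_comb_sets_eq_2_iff[OF N c, of "\<lambda>i. wstar_slice N (zs i) (\<alpha>s i)"]
      nonempty \<open>0 < \<delta>\<close> that unfolding wstar_slice_def by blast
qed

lemma wstar_SD2P_weighted_witnesses:
  fixes n :: nat
  assumes SD: "wstar_SD2P N" and N: "homogeneous_gauge N" and w: "\<forall>i<n. 0 \<le> w i"
    and zs: "\<forall>i<n. N (zs i) = 1 \<and> 0 < \<alpha>s i"
    and nonempty: "\<forall>i<n. wstar_slice N (zs i) (\<alpha>s i) \<noteq> {}" and "0 < \<delta>"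
  obtains f g z where "\<forall>i<n. f i \<in> wstar_slice N (zs i) (\<alpha>s i) \<and> g i \<in> wstar_slice N (zs i) (\<alpha>s i)"
    and "N z \<le> 1" and "(\<Sum>i<n. w i) * (2 - \<delta>) \<le> (\<Sum>i<n. w i * (f i z - g i z))"
proof (cases "(\<Sum>i<n. w i) = 0")
  case True
  define f where "f i = (SOME f. f \<in> wstar_slice N (zs i) (\<alpha>s i))" for i
  have "\<forall>i<n. f i \<in> wstar_slice N (zs i) (\<alpha>s i)"
    using nonempty unfolding f_def by (simp add: some_in_eq)
  then show ?thesis using that[of f f 0] True homogeneous_gauge_zero[OF N] by simp
next
  case False
  define W where "W = (\<Sum>i<n. w i)"
  have W: "0 < W" using False w sum_nonneg[of "{..<n}" w] unfolding W_def by force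
  have "n \<noteq> 0" using False by (metis lessThan_0 sum.empty)
  then have "convex_slice_data N n (\<lambda>i. w i / W) zs \<alpha>s"
    unfolding convex_slice_data_def using w zs W by (auto simp: W_def sum_divide_distrib[symmetric])
  then obtain f g z where fg: "\<forall>i<n. f i \<in> wstar_slice N (zs i) (\<alpha>s i) \<and> g i \<in> wstar_slice N (zs i) (\<alpha>s i)"
    and z: "N z \<le> 1" and gt: "2 - \<delta> < (\<Sum>i<n. w i / W * (f i z - g i z))"
    using wstar_SD2P_witnesses[OF SD N _ nonempty \<open>0 < \<delta>\<close>] by blast
  have "(\<Sum>i<n. w i / W * (f i z - g i z)) = (\<Sum>i<n. w i * (f i z - g i z)) / W"
    unfolding sum_divide_distrib by simp
  with gt have "(2 - \<delta>) * W < (\<Sum>i<n. w i * (f i z - g i z))"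
    using pos_less_divide_eq[OF W] by simp
  then have "W * (2 - \<delta>) \<le> (\<Sum>i<n. w i * (f i z - g i z))" by (simp add: mult.commute)
  then show ?thesis using that[OF fg z] unfolding W_def by blast
qed

section \<open>Norming functionals\<close>

definition dominated_subspace :: "('a::real_normed_vector \<times> real) set \<Rightarrow> bool" where
  "dominated_subspace G \<longleftrightarrow> subspace G \<and> (\<forall>(u, t)\<in>G. t \<le> norm u)"

lemma dominated_subspace_separating_value:
  assumes "dominated_subspace G"
  obtains c where "\<And>g t. (g, t) \<in> G \<Longrightarrow> t - norm (g - u0) \<le> c"
    and "\<And>g t. (g, t) \<in> G \<Longrightarrow> c \<le> norm (g + u0) - t"
proof -
  have sub: "subspace G" and dom: "\<And>u t. (u, t) \<in> G \<Longrightarrow> t \<le> norm u"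
    using assms unfolding dominated_subspace_def by auto
  have G0: "(0, 0) \<in> G" using subspace_0[OF sub] by (simp add: zero_prod_def)
  have sep: "t - norm (g - u0) \<le> norm (g' + u0) - t'" if "(g, t) \<in> G" "(g', t') \<in> G" for g t g' t'
  proof -
    have "t + t' \<le> norm (g + g')" using dom subspace_add[OF sub that] by simp
    also have "\<dots> \<le> norm (g - u0) + norm (g' + u0)"
      using norm_triangle_ineq[of "g - u0" "g' + u0"] by simp
    finally show ?thesis by simp
  qed
  define L where "L = {t - norm (g - u0) | g t. (g, t) \<in> G}"
  have "L \<noteq> {}" using G0 unfolding L_def by blast
  have "l \<le> norm u0" if "l \<in> L" for l using that sep[OF _ G0] unfolding L_def by force
  then have "bdd_above L" by (rule bdd_aboveI)
  show ?thesis
  proof (rule that)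
    show "t - norm (g - u0) \<le> Sup L" if "(g, t) \<in> G" for g t
      using that \<open>bdd_above L\<close> unfolding L_def by (auto intro: cSup_upper)
    show "Sup L \<le> norm (g + u0) - t" if "(g, t) \<in> G" for g t
      using that \<open>L \<noteq> {}\<close> sep unfolding L_def by (auto intro!: cSup_least)
  qed
qed

lemma dominated_subspace_extension_value:
  assumes "dominated_subspace G"
  obtains c where "\<And>g t s. (g, t) \<in> G \<Longrightarrow> t + s * c \<le> norm (g + s *\<^sub>R u0)"
proof -
  have sub: "subspace G" and dom: "\<And>u t. (u, t) \<in> G \<Longrightarrow> t \<le> norm u"
    using assms unfolding dominated_subspace_def by auto
  obtain c where c1: "\<And>g t. (g, t) \<in> G \<Longrightarrow> t - norm (g - u0) \<le> c"
    and c2: "\<And>g t. (g, t) \<in> G \<Longrightarrow> c \<le> norm (g + u0) - t"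
    using dominated_subspace_separating_value[OF assms] by blast
  have "t + s * c \<le> norm (g + s *\<^sub>R u0)" if gt: "(g, t) \<in> G" for g t s
  proof -
    have scaled: "((1 / r) *\<^sub>R g, (1 / r) * t) \<in> G" for r
      using subspace_scale[OF sub gt, of "1 / r"] by simp
    consider "s = 0" | "s > 0" | "s < 0" by linarith
    then show ?thesis
    proof cases
      case 1
      then show ?thesis using dom gt by simp
    next
      case 2
      have "s * c \<le> s * (norm ((1 / s) *\<^sub>R g + u0) - (1 / s) * t)"
        using c2[OF scaled] 2 by (simp add: mult_left_mono)
      also have "\<dots> = norm (s *\<^sub>R ((1 / s) *\<^sub>R g + u0)) - t"
        using 2 by (simp add: right_diff_distrib)
      finally show ?thesis using 2 by (simp add: scaleR_add_right)
    next
      case 3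
      define r where "r = -s"
      have r: "r > 0" using 3 by (simp add: r_def)
      have "r * ((1 / r) * t - norm ((1 / r) *\<^sub>R g - u0)) \<le> r * c"
        using c1[OF scaled] r by (simp add: mult_left_mono)
      moreover have "r * norm ((1 / r) *\<^sub>R g - u0) = norm (r *\<^sub>R ((1 / r) *\<^sub>R g - u0))"
        using r by simp
      ultimately show ?thesis using r by (simp add: r_def right_diff_distrib scaleR_diff_right)
    qed
  qed
  then show ?thesis by (rule that)
qed

lemma subspace_extend_Pair:
  assumes "subspace G"
  shows "subspace {(g + s *\<^sub>R u0, t + s * c) | g t s. (g, t) \<in> G}" (is "subspace ?G'")
proof (rule subspaceI)
  show "0 \<in> ?G'" using subspace_0[OF assms] by (force simp: zero_prod_def)
next
  fix a b assume "a \<in> ?G'" "b \<in> ?G'"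
  then obtain g t s g' t' s' where "a = (g + s *\<^sub>R u0, t + s * c)" "(g, t) \<in> G"
    and "b = (g' + s' *\<^sub>R u0, t' + s' * c)" "(g', t') \<in> G" by blast
  moreover have "(g + g', t + t') \<in> G" using subspace_add[OF assms calculation(2,4)] by simp
  moreover have "a + b = ((g + g') + (s + s') *\<^sub>R u0, (t + t') + (s + s') * c)"
    using calculation(1,3) by (simp add: algebra_simps scaleR_add_left)
  ultimately show "a + b \<in> ?G'" by blast
next
  fix r a assume "a \<in> ?G'"
  then obtain g t s where "a = (g + s *\<^sub>R u0, t + s * c)" "(g, t) \<in> G" by blast
  moreover have "(r *\<^sub>R g, r * t) \<in> G" using subspace_scale[OF assms calculation(2)] by simp
  moreover have "r *\<^sub>R a = (r *\<^sub>R g + (r * s) *\<^sub>R u0, r * t + (r * s) * c)"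
    using calculation(1) by (simp add: algebra_simps scaleR_add_right)
  ultimately show "r *\<^sub>R a \<in> ?G'" by blast
qed

text \<open>The one-dimensional step of the Hahn--Banach theorem, phrased for graphs.\<close>
lemma dominated_subspace_extend:
  assumes dom: "dominated_subspace G" and new: "\<forall>t. (u0, t) \<notin> G"
  shows "\<exists>G'. dominated_subspace G' \<and> G \<subset> G'"
proof -
  obtain c where bound: "\<And>g t s. (g, t) \<in> G \<Longrightarrow> t + s * c \<le> norm (g + s *\<^sub>R u0)"
    using dominated_subspace_extension_value[OF dom] by blast
  define G' where "G' = {(g + s *\<^sub>R u0, t + s * c) | g t s. (g, t) \<in> G}"
  have sub: "subspace G" using dom unfolding dominated_subspace_def by blast
  have "dominated_subspace G'"
    unfolding dominated_subspace_def G'_def using subspace_extend_Pair[OF sub] bound by blast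
  moreover have "G \<subseteq> G'" unfolding G'_def by force
  moreover have "(u0, c) \<in> G'" unfolding G'_def using subspace_0[OF sub] by (force simp: zero_prod_def)
  ultimately show ?thesis using new by blast
qed

lemma dominated_subspace_Union_chain:
  assumes "C \<noteq> {}" and "\<And>X. X \<in> C \<Longrightarrow> dominated_subspace X"
    and comparable: "\<And>X Y. X \<in> C \<Longrightarrow> Y \<in> C \<Longrightarrow> X \<subseteq> Y \<or> Y \<subseteq> X"
  shows "dominated_subspace (\<Union>C)"
proof -
  have sub: "\<And>X. X \<in> C \<Longrightarrow> subspace X" using assms(2) unfolding dominated_subspace_def by blast
  have "subspace (\<Union>C)"
  proof (rule subspaceI)
    show "0 \<in> \<Union>C" using assms(1) sub subspace_0 by blast
  next
    fix a b assume "a \<in> \<Union>C" "b \<in> \<Union>C"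
    then obtain X Y where "a \<in> X" "X \<in> C" "b \<in> Y" "Y \<in> C" by blast
    then show "a + b \<in> \<Union>C" using comparable[of X Y] sub subspace_add by blast
  next
    fix r a assume "a \<in> \<Union>C"
    then show "r *\<^sub>R a \<in> \<Union>C" using sub subspace_scale by blast
  qed
  then show ?thesis using assms(2) unfolding dominated_subspace_def by blast
qed

lemma dominated_subspace_graph:
  assumes "dominated_subspace M" and total: "\<And>u. \<exists>t. (u, t) \<in> M"
  obtains f where "linear f" "\<And>u. \<bar>f u\<bar> \<le> norm u" "\<And>u t. (u, t) \<in> M \<Longrightarrow> f u = t"
proof -
  have sub: "subspace M" and dom: "\<And>u t. (u, t) \<in> M \<Longrightarrow> t \<le> norm u"
    using assms(1) unfolding dominated_subspace_def by auto
  have unique: "t = t'" if "(u, t) \<in> M" "(u, t') \<in> M" for u t t'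
  proof -
    have "(0, t - t') \<in> M" "(0, t' - t) \<in> M"
      using subspace_diff[OF sub that] subspace_diff[OF sub that(2,1)] by simp_all
    then show ?thesis using dom[of 0 "t - t'"] dom[of 0 "t' - t"] by simp
  qed
  define f where "f u = (THE t. (u, t) \<in> M)" for u
  have fM: "(u, f u) \<in> M" for u
    unfolding f_def using total[of u] unique by (metis theI)
  have f_eq: "f u = t" if "(u, t) \<in> M" for u t using unique[OF fM that] .
  have "linear f"
    by (rule linearI) (use f_eq subspace_add[OF sub fM fM] subspace_scale[OF sub fM] in auto)
  moreover have "\<bar>f u\<bar> \<le> norm u" for u
    using dom[OF fM, of u] dom[OF fM, of "-u"] linear_neg[OF \<open>linear f\<close>, of u] by simp
  ultimately show ?thesis using that f_eq by blast
qed

lemma exists_norming_functional: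
  fixes x :: "'a::real_normed_vector"
  obtains f where "linear f" "\<And>u. \<bar>f u\<bar> \<le> norm u" "f x = norm x"
proof -
  define A where "A = {G. dominated_subspace G \<and> (x, norm x) \<in> G}"
  have "\<forall>(u, t)\<in>span {(x, norm x)}. t \<le> norm u"
  proof (clarsimp simp: span_singleton)
    fix k :: real
    show "k * norm x \<le> \<bar>k\<bar> * norm x" by (simp add: mult_right_mono)
  qed
  then have "span {(x, norm x)} \<in> A"
    unfolding A_def dominated_subspace_def by (simp add: span_base)
  then have "A \<noteq> {}" by blast
  moreover have "\<Union>C \<in> A" if "C \<noteq> {}" "subset.chain A C" for C
    using that dominated_subspace_Union_chain[of C] unfolding A_def subset.chain_def by blast
  ultimately obtain M where "M \<in> A" and Mmax: "\<And>X. X \<in> A \<Longrightarrow> M \<subseteq> X \<Longrightarrow> X = M"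
    using subset_Zorn_nonempty[of A] by blast
  then have domM: "dominated_subspace M" and Mx: "(x, norm x) \<in> M" unfolding A_def by auto
  have "\<exists>t. (u, t) \<in> M" for u
    using dominated_subspace_extend[OF domM, of u] Mmax Mx unfolding A_def by blast
  then obtain f where "linear f" "\<And>u. \<bar>f u\<bar> \<le> norm u" "f x = norm x"
    using dominated_subspace_graph[OF domM] Mx by metis
  then show ?thesis by (rule that)
qed

lemma norming_functional_in_dual_ball:
  fixes x :: "'a::real_normed_vector"
  shows "\<exists>f\<in>dual_ball norm. f x = norm x"
  using exists_norming_functional[of x] dual_ball_iff[OF homogeneous_gauge_norm] by metis

lemma wstar_slice_norm_nonempty:
  fixes z :: "'a::real_normed_vector"
  assumes "norm z = 1" "0 < \<alpha>"
  shows "wstar_slice norm z \<alpha> \<noteq> {}"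
  using norming_functional_in_dual_ball[of z] assms unfolding wstar_slice_def by force

lemma exists_norm_one:
  "\<exists>x::'a::real_normed_vector. x \<noteq> 0 \<Longrightarrow> \<exists>x::'a. norm x = 1"
  by (metis norm_sgn)

section \<open>Functionals on products\<close>

lemma linear_Pair_zero_right: "linear (\<lambda>u. (u, 0))"
  by (rule linearI) simp_all

lemma linear_Pair_zero_left: "linear (\<lambda>v. (0, v))"
  by (rule linearI) simp_all

lemma linear_swap: "linear prod.swap"
  by (rule linearI) (simp_all add: prod_eq_iff)

lemma linear_Pair_split: "linear h \<Longrightarrow> h (u, v) = h (u, 0) + h (0, v)"
  using linear_add[of h "(u, 0)" "(0, v)"] by simp

lemma dual_ball_comp_linear:
  assumes M: "homogeneous_gauge M" and N: "homogeneous_gauge N" and k: "k \<in> dual_ball M"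
    and L: "linear L" and le: "\<And>w. M (L w) \<le> N w"
  shows "(\<lambda>w. k (L w)) \<in> dual_ball N"
proof -
  have "linear k" and "\<And>u. \<bar>k u\<bar> \<le> M u" using k dual_ball_iff[OF M] by auto
  then show ?thesis
    unfolding dual_ball_iff[OF N]
    using linear_compose[OF L \<open>linear k\<close>] order_trans[OF _ le] by (simp add: o_def)
qed

section \<open>The 1-sum\<close>

lemma norm_minus_less_of_sgn_peak:
  assumes "x \<noteq> 0" "linear k" "1 - \<alpha> / norm x < k (sgn x)"
  shows "norm x - \<alpha> < k x"
proof -
  have "k (sgn x) = k x / norm x"
    using assms(2) by (simp add: sgn_div_norm linear_scale divide_inverse mult.commute)
  then show ?thesis using assms(1,3) by (simp add: field_simps)
qed

lemma wstar_slice_norm_sum1: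
  assumes k: "k \<in> dual_ball norm" and g: "g \<in> dual_ball norm" "g y = norm y"
    and xy: "norm x + norm y = 1" and "0 < \<alpha>" and peak: "x \<noteq> 0 \<Longrightarrow> 1 - \<alpha> / norm x < k (sgn x)"
  shows "(\<lambda>w. k (fst w) + g (snd w)) \<in> wstar_slice norm_sum1 (x, y) \<alpha>"
proof -
  have lin: "linear k" "linear g" and bd: "\<And>u. \<bar>k u\<bar> \<le> norm u" "\<And>v. \<bar>g v\<bar> \<le> norm v"
    using k g(1) dual_ball_iff[OF homogeneous_gauge_norm] by auto
  have "linear (\<lambda>w. k (fst w) + g (snd w))"
    using linear_compose[OF linear_fst lin(1)] linear_compose[OF linear_snd lin(2)]
    by (intro linear_compose_add) (simp_all add: o_def)
  moreover have "norm x - \<alpha> < k x"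
    using norm_minus_less_of_sgn_peak[OF _ lin(1) peak] linear_0[OF lin(1)] \<open>0 < \<alpha>\<close>
    by (cases "x = 0") auto
  ultimately show ?thesis
    unfolding wstar_slice_iff[OF homogeneous_gauge_norm_sum1] norm_sum1_def
    using g(2) xy bd by (auto intro: order_trans[OF abs_triangle_ineq add_mono])
qed

theorem wstar_SD2P_norm_sum1:
  assumes SD: "wstar_SD2P (norm :: 'a::real_normed_vector \<Rightarrow> real)" and X: "\<exists>x::'a. x \<noteq> 0"
  shows "wstar_SD2P (norm_sum1 :: 'a \<times> 'b::real_normed_vector \<Rightarrow> real)"
proof (rule wstar_SD2P_intro[OF homogeneous_gauge_norm_sum1])
  fix n c and zs :: "nat \<Rightarrow> 'a \<times> 'b" and \<alpha>s and \<delta> :: real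
  assume data: "convex_slice_data norm_sum1 n c zs \<alpha>s" and "0 < \<delta>"
  then have zs: "\<forall>i<n. norm (fst (zs i)) + norm (snd (zs i)) = 1 \<and> 0 < \<alpha>s i"
    unfolding convex_slice_data_def norm_sum1_def by simp
  obtain x0 :: 'a where x0: "norm x0 = 1" using exists_norm_one[OF X] by blast
  obtain g where "\<forall>i. g i \<in> dual_ball norm \<and> g i (snd (zs i)) = norm (snd (zs i))"
    using choice[of "\<lambda>i f. f \<in> dual_ball norm \<and> f (snd (zs i)) = norm (snd (zs i))"]
      norming_functional_in_dual_ball by blast
  then have g: "\<And>i. g i \<in> dual_ball norm" "\<And>i. g i (snd (zs i)) = norm (snd (zs i))" by auto
  define xs where "xs i = (if fst (zs i) = 0 then x0 else sgn (fst (zs i)))" for i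
  define \<alpha>xs where "\<alpha>xs i = (if fst (zs i) = 0 then 1 else \<alpha>s i / norm (fst (zs i)))" for i
  have "convex_slice_data norm n c xs \<alpha>xs"
    using data zs x0 unfolding convex_slice_data_def xs_def \<alpha>xs_def by (auto simp: norm_sgn)
  moreover have "\<forall>i<n. wstar_slice norm (xs i) (\<alpha>xs i) \<noteq> {}"
    using calculation wstar_slice_norm_nonempty unfolding convex_slice_data_def by blast
  ultimately obtain f f' u where ff: "\<forall>i<n. f i \<in> wstar_slice norm (xs i) (\<alpha>xs i) \<and> f' i \<in> wstar_slice norm (xs i) (\<alpha>xs i)"
    and u: "norm u \<le> 1" and far: "2 - \<delta> < (\<Sum>i<n. c i * (f i u - f' i u))"
    using wstar_SD2P_witnesses[OF SD homogeneous_gauge_norm] \<open>0 < \<delta>\<close> by blast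
  have lifted: "(\<lambda>w. k (fst w) + g i (snd w)) \<in> wstar_slice norm_sum1 (zs i) (\<alpha>s i)"
    if "k \<in> wstar_slice norm (xs i) (\<alpha>xs i)" "i < n" for k i
  proof -
    have k: "k \<in> dual_ball norm"
      and peak: "fst (zs i) \<noteq> 0 \<Longrightarrow> 1 - \<alpha>s i / norm (fst (zs i)) < k (sgn (fst (zs i)))"
      using that(1) unfolding wstar_slice_def xs_def \<alpha>xs_def by auto
    have "norm (fst (zs i)) + norm (snd (zs i)) = 1" "0 < \<alpha>s i" using zs that(2) by auto
    from wstar_slice_norm_sum1[OF k g(1) g(2) this peak] show ?thesis by simp
  qed
  have hs: "\<forall>i<n. (\<lambda>w. f i (fst w) + g i (snd w)) \<in> wstar_slice norm_sum1 (zs i) (\<alpha>s i)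
      \<and> (\<lambda>w. f' i (fst w) + g i (snd w)) \<in> wstar_slice norm_sum1 (zs i) (\<alpha>s i)"
    using ff lifted by blast
  have "g i 0 = 0" for i using g(1) dual_ball_iff[OF homogeneous_gauge_norm] linear_0 by blast
  then have "(\<Sum>i<n. c i * ((f i u + g i 0) - (f' i u + g i 0))) = (\<Sum>i<n. c i * (f i u - f' i u))"
    by simp
  moreover have "norm_sum1 (u, 0::'b) \<le> 1" using u by (simp add: norm_sum1_def)
  ultimately show "\<exists>h h' z. (\<forall>i<n. h i \<in> wstar_slice norm_sum1 (zs i) (\<alpha>s i) \<and> h' i \<in> wstar_slice norm_sum1 (zs i) (\<alpha>s i))
      \<and> norm_sum1 z \<le> 1 \<and> 2 - \<delta> < (\<Sum>i<n. c i * (h i z - h' i z))"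
    using hs far
    by (intro exI[of _ "\<lambda>i w. f i (fst w) + g i (snd w)"] exI[of _ "\<lambda>i w. f' i (fst w) + g i (snd w)"]
        exI[of _ "(u, 0)"]) simp
qed

section \<open>The \<infinity>-sum\<close>

lemma wstar_slice_suminf_fst:
  assumes "k \<in> wstar_slice norm (fst z) \<alpha>"
  shows "(\<lambda>w. k (fst w)) \<in> wstar_slice norm_suminf z \<alpha>"
  using assms dual_ball_comp_linear[OF homogeneous_gauge_norm homogeneous_gauge_norm_suminf _ linear_fst]
  unfolding wstar_slice_def norm_suminf_def by auto

lemma wstar_slice_suminf_snd:
  assumes "k \<in> wstar_slice norm (snd z) \<alpha>"
  shows "(\<lambda>w. k (snd w)) \<in> wstar_slice norm_suminf z \<alpha>"
  using assms dual_ball_comp_linear[OF homogeneous_gauge_norm homogeneous_gauge_norm_suminf _ linear_snd]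
  unfolding wstar_slice_def norm_suminf_def by auto

lemma wstar_slice_suminf_restrict:
  assumes "h \<in> wstar_slice norm_suminf (x, 0) \<alpha>"
  shows "(\<lambda>u. h (u, 0)) \<in> wstar_slice norm x \<alpha>"
  using assms dual_ball_comp_linear[OF homogeneous_gauge_norm_suminf homogeneous_gauge_norm _ linear_Pair_zero_right]
  unfolding wstar_slice_def norm_suminf_def by auto

lemma wstar_slice_suminf_near_restriction:
  assumes h: "h \<in> wstar_slice norm_suminf (x, 0) \<alpha>" and "norm x = 1" "norm v \<le> 1"
  shows "\<bar>h (u, v) - h (u, 0)\<bar> < \<alpha>"
proof -
  have lin: "linear h" and bd: "\<And>w. \<bar>h w\<bar> \<le> norm_suminf w" and peak: "1 - \<alpha> < h (x, 0)"
    using h unfolding wstar_slice_iff[OF homogeneous_gauge_norm_suminf] by auto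
  have "h (x, 0) + h (0, t) \<le> 1" if "norm t \<le> 1" for t
    using bd[of "(x, t)"] that \<open>norm x = 1\<close> linear_Pair_split[OF lin, of x t]
    by (simp add: norm_suminf_def)
  from this[of v] this[of "- v"] have "\<bar>h (0, v)\<bar> < \<alpha>"
    using peak \<open>norm v \<le> 1\<close> linear_neg[OF lin, of "(0, v)"] by simp
  then show ?thesis using linear_Pair_split[OF lin, of u v] by simp
qed

lemma wstar_slice_suminf_thin:
  assumes h: "h \<in> wstar_slice norm_suminf (x, 0) (min \<alpha> \<epsilon>)" and "norm x = 1" "norm v \<le> 1"
  shows "(\<lambda>u. h (u, 0)) \<in> wstar_slice norm x \<alpha>" and "\<bar>h (u, v) - h (u, 0)\<bar> < \<epsilon>"
proof -
  show "(\<lambda>u. h (u, 0)) \<in> wstar_slice norm x \<alpha>"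
    using wstar_slice_suminf_restrict[OF h] wstar_slice_mono[of "min \<alpha> \<epsilon>" \<alpha>] by auto
  show "\<bar>h (u, v) - h (u, 0)\<bar> < \<epsilon>"
    using wstar_slice_suminf_near_restriction[OF h assms(2,3), of u] by linarith
qed

theorem wstar_SD2P_norm_suminf:
  assumes SDX: "wstar_SD2P (norm :: 'a::real_normed_vector \<Rightarrow> real)"
    and SDY: "wstar_SD2P (norm :: 'b::real_normed_vector \<Rightarrow> real)"
    and X: "\<exists>x::'a. x \<noteq> 0" and Y: "\<exists>y::'b. y \<noteq> 0"
  shows "wstar_SD2P (norm_suminf :: 'a \<times> 'b \<Rightarrow> real)"
proof (rule wstar_SD2P_intro[OF homogeneous_gauge_norm_suminf])
  fix n c and zs :: "nat \<Rightarrow> 'a \<times> 'b" and \<alpha>s and \<delta> :: real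
  assume data: "convex_slice_data norm_suminf n c zs \<alpha>s" and "0 < \<delta>"
  then have c: "\<forall>i<n. 0 \<le> c i" "(\<Sum>i<n. c i) = 1"
    and zs: "\<forall>i<n. max (norm (fst (zs i))) (norm (snd (zs i))) = 1 \<and> 0 < \<alpha>s i"
    unfolding convex_slice_data_def norm_suminf_def by auto
  obtain x0 :: 'a where x0: "norm x0 = 1" using exists_norm_one[OF X] by blast
  obtain y0 :: 'b where y0: "norm y0 = 1" using exists_norm_one[OF Y] by blast
  \<comment> \<open>Slices whose centre has a first coordinate of norm 1 are handled in X, the others in Y;
    the other factor gets a dummy slice and weight 0.\<close>
  define I where "I i \<longleftrightarrow> norm (fst (zs i)) = 1" for i
  define xs where "xs i = (if I i then fst (zs i) else x0)" for i
  define ys where "ys i = (if I i then y0 else snd (zs i))" for i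
  define \<alpha>xs where "\<alpha>xs i = (if I i then \<alpha>s i else 1)" for i
  define \<alpha>ys where "\<alpha>ys i = (if I i then 1 else \<alpha>s i)" for i
  define wx where "wx i = (if I i then c i else 0)" for i
  define wy where "wy i = (if I i then 0 else c i)" for i
  have xs: "\<forall>i<n. norm (xs i) = 1 \<and> 0 < \<alpha>xs i" using x0 zs unfolding xs_def \<alpha>xs_def I_def by auto
  have ys: "\<forall>i<n. norm (ys i) = 1 \<and> 0 < \<alpha>ys i"
    using y0 zs unfolding ys_def \<alpha>ys_def I_def by (auto simp: max_def split: if_splits)
  have "0 < \<delta> / 2" using \<open>0 < \<delta>\<close> by simp
  have wx: "\<forall>i<n. 0 \<le> wx i" and wy: "\<forall>i<n. 0 \<le> wy i" using c(1) unfolding wx_def wy_def by auto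
  obtain f f' u where ff: "\<forall>i<n. f i \<in> wstar_slice norm (xs i) (\<alpha>xs i) \<and> f' i \<in> wstar_slice norm (xs i) (\<alpha>xs i)"
    and u: "norm u \<le> 1" and far_x: "(\<Sum>i<n. wx i) * (2 - \<delta> / 2) \<le> (\<Sum>i<n. wx i * (f i u - f' i u))"
    using wstar_SD2P_weighted_witnesses[OF SDX homogeneous_gauge_norm wx xs _ \<open>0 < \<delta> / 2\<close>]
      xs wstar_slice_norm_nonempty by blast
  obtain g g' v where gg: "\<forall>i<n. g i \<in> wstar_slice norm (ys i) (\<alpha>ys i) \<and> g' i \<in> wstar_slice norm (ys i) (\<alpha>ys i)"
    and v: "norm v \<le> 1" and far_y: "(\<Sum>i<n. wy i) * (2 - \<delta> / 2) \<le> (\<Sum>i<n. wy i * (g i v - g' i v))"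
    using wstar_SD2P_weighted_witnesses[OF SDY homogeneous_gauge_norm wy ys _ \<open>0 < \<delta> / 2\<close>]
      ys wstar_slice_norm_nonempty by blast
  define h where "h i w = (if I i then f i (fst w) else g i (snd w))" for i w
  define h' where "h' i w = (if I i then f' i (fst w) else g' i (snd w))" for i w
  have slices: "h i \<in> wstar_slice norm_suminf (zs i) (\<alpha>s i) \<and> h' i \<in> wstar_slice norm_suminf (zs i) (\<alpha>s i)"
    if "i < n" for i
    using ff gg that wstar_slice_suminf_fst[of _ "zs i"] wstar_slice_suminf_snd[of _ "zs i"]
    unfolding h_def h'_def xs_def ys_def \<alpha>xs_def \<alpha>ys_def by (cases "I i") auto
  have "norm_suminf (u, v) \<le> 1" using u v by (simp add: norm_suminf_def)
  moreover have "(\<Sum>i<n. c i * (h i (u, v) - h' i (u, v)))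
      = (\<Sum>i<n. wx i * (f i u - f' i u)) + (\<Sum>i<n. wy i * (g i v - g' i v))"
    unfolding sum.distrib[symmetric] h_def h'_def wx_def wy_def by (intro sum.cong) auto
  moreover have "wx i + wy i = c i" for i unfolding wx_def wy_def by simp
  then have "(\<Sum>i<n. wx i) * (2 - \<delta> / 2) + (\<Sum>i<n. wy i) * (2 - \<delta> / 2) = 2 - \<delta> / 2"
    using c(2) by (simp add: sum.distrib[symmetric] distrib_right[symmetric])
  ultimately have "norm_suminf (u, v) \<le> 1 \<and> 2 - \<delta> < (\<Sum>i<n. c i * (h i (u, v) - h' i (u, v)))"
    using far_x far_y \<open>0 < \<delta>\<close> by linarith
  then show "\<exists>h h' z. (\<forall>i<n. h i \<in> wstar_slice norm_suminf (zs i) (\<alpha>s i) \<and> h' i \<in> wstar_slice norm_suminf (zs i) (\<alpha>s i))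
      \<and> norm_suminf z \<le> 1 \<and> 2 - \<delta> < (\<Sum>i<n. c i * (h i z - h' i z))"
    using slices by blast
qed

theorem wstar_SD2P_of_norm_suminf:
  assumes SD: "wstar_SD2P (norm_suminf :: 'a::real_normed_vector \<times> 'b::real_normed_vector \<Rightarrow> real)"
  shows "wstar_SD2P (norm :: 'a \<Rightarrow> real)"
proof (rule wstar_SD2P_intro[OF homogeneous_gauge_norm])
  fix n c and zs :: "nat \<Rightarrow> 'a" and \<alpha>s and \<delta> :: real
  assume data: "convex_slice_data norm n c zs \<alpha>s" and "0 < \<delta>"
  then have c: "\<forall>i<n. 0 \<le> c i" "(\<Sum>i<n. c i) = 1" and zs: "\<forall>i<n. norm (zs i) = 1 \<and> 0 < \<alpha>s i"
    unfolding convex_slice_data_def by auto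
  define \<epsilon> where "\<epsilon> = \<delta> / 4"
  have "0 < \<epsilon>" using \<open>0 < \<delta>\<close> unfolding \<epsilon>_def by simp
  define \<alpha>s' where "\<alpha>s' i = min (\<alpha>s i) \<epsilon>" for i
  have data': "convex_slice_data norm_suminf n c (\<lambda>i. (zs i, 0::'b)) \<alpha>s'"
    using data \<open>0 < \<epsilon>\<close> unfolding convex_slice_data_def \<alpha>s'_def norm_suminf_def by auto
  have "wstar_slice norm_suminf (zs i, 0::'b) (\<alpha>s' i) \<noteq> {}" if "i < n" for i
  proof -
    have "wstar_slice norm (zs i) (\<alpha>s' i) \<noteq> {}"
      using zs that \<open>0 < \<epsilon>\<close> by (intro wstar_slice_norm_nonempty) (auto simp: \<alpha>s'_def)
    then show ?thesis using wstar_slice_suminf_fst[of _ "(zs i, 0::'b)"] by fastforce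
  qed
  then obtain h h' w where hh: "\<forall>i<n. h i \<in> wstar_slice norm_suminf (zs i, 0::'b) (\<alpha>s' i)
      \<and> h' i \<in> wstar_slice norm_suminf (zs i, 0) (\<alpha>s' i)"
    and w: "norm_suminf w \<le> 1" and far: "2 - \<epsilon> < (\<Sum>i<n. c i * (h i w - h' i w))"
    using wstar_SD2P_witnesses[OF SD homogeneous_gauge_norm_suminf data' _ \<open>0 < \<epsilon>\<close>] by blast
  obtain u v where uv: "w = (u, v)" by (cases w)
  have u: "norm u \<le> 1" and v: "norm v \<le> 1" using w uv by (auto simp: norm_suminf_def)
  have restrict: "(\<lambda>x. k (x, 0)) \<in> wstar_slice norm (zs i) (\<alpha>s i)"
    and near: "\<bar>k (u, v) - k (u, 0)\<bar> < \<epsilon>"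
    if "k \<in> wstar_slice norm_suminf (zs i, 0) (\<alpha>s' i)" "i < n" for k i
    using wstar_slice_suminf_thin[OF that(1)[unfolded \<alpha>s'_def]] zs that(2) v by auto
  define f where "f i x = h i (x, 0)" for i x
  define f' where "f' i x = h' i (x, 0)" for i x
  have restricted: "\<forall>i<n. f i \<in> wstar_slice norm (zs i) (\<alpha>s i) \<and> f' i \<in> wstar_slice norm (zs i) (\<alpha>s i)"
    using hh restrict unfolding f_def[abs_def] f'_def[abs_def] by blast
  have "(h i (u, v) - h' i (u, v)) - (f i u - f' i u) \<le> 2 * \<epsilon>" if "i < n" for i
    using near[of "h i" i] near[of "h' i" i] hh that unfolding f_def f'_def by fastforce
  then have "(\<Sum>i<n. c i * ((h i (u, v) - h' i (u, v)) - (f i u - f' i u))) \<le> 2 * \<epsilon>"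
    by (intro convex_sum_le[OF c]) simp
  moreover have "(\<Sum>i<n. c i * ((h i (u, v) - h' i (u, v)) - (f i u - f' i u)))
      = (\<Sum>i<n. c i * (h i (u, v) - h' i (u, v))) - (\<Sum>i<n. c i * (f i u - f' i u))"
    by (simp add: right_diff_distrib sum_subtractf)
  ultimately have "2 - \<delta> < (\<Sum>i<n. c i * (f i u - f' i u))"
    using far \<open>0 < \<delta>\<close> unfolding uv \<epsilon>_def by linarith
  then show "\<exists>f f' z. (\<forall>i<n. f i \<in> wstar_slice norm (zs i) (\<alpha>s i) \<and> f' i \<in> wstar_slice norm (zs i) (\<alpha>s i))
      \<and> norm z \<le> 1 \<and> 2 - \<delta> < (\<Sum>i<n. c i * (f i z - f' i z))"
    using restricted u by blast
qed

section \<open>The p-sum\<close>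

lemma norm_sump_Pair_zero: "0 < p \<Longrightarrow> norm_sump p (u, 0) = norm u"
  unfolding norm_sump_def by (simp add: powr_powr)

lemma norm_sump_swap: "norm_sump p (prod.swap w) = norm_sump p w"
  unfolding norm_sump_def by (simp add: add.commute)

lemma norm_fst_le_norm_sump:
  assumes "0 < p"
  shows "norm (fst w) \<le> norm_sump p w"
proof -
  have "(norm (fst w) powr p) powr (1 / p) \<le> (norm (fst w) powr p + norm (snd w) powr p) powr (1 / p)"
    using assms by (intro powr_mono2) auto
  then show ?thesis unfolding norm_sump_def using assms by (simp add: powr_powr)
qed

lemma powr_add_le_one_of_norm_sump_le_one:
  assumes "0 < p" "norm_sump p (u, v) \<le> 1"
  shows "norm u powr p + norm v powr p \<le> 1"
proof -
  define T where "T = norm u powr p + norm v powr p"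
  have "(T powr (1 / p)) powr p \<le> 1 powr p"
    using assms unfolding norm_sump_def T_def by (intro powr_mono2) auto
  then show ?thesis using assms(1) unfolding T_def by (simp add: powr_powr)
qed

lemma add_le_of_powr_add_le_one:
  fixes a b p :: real
  assumes p: "0 < p" and "0 \<le> a" "0 \<le> b" and S: "a powr p + b powr p \<le> 1"
  shows "a + b \<le> 1 + (1 / 2) powr (1 / p)"
proof -
  have "min a b powr p \<le> a powr p" "min a b powr p \<le> b powr p"
    using p assms(2,3) by (auto intro: powr_mono2)
  then have "min a b powr p \<le> 1 / 2" using S by linarith
  then have "(min a b powr p) powr (1 / p) \<le> (1 / 2) powr (1 / p)"
    using p by (intro powr_mono2) auto
  then have min: "min a b \<le> (1 / 2) powr (1 / p)" using p assms(2,3) by (simp add: powr_powr)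
  have "a powr p \<le> 1" "b powr p \<le> 1" using S powr_ge_zero[of a p] powr_ge_zero[of b p] by linarith+
  then have "max a b powr p \<le> 1" by (simp add: max_def)
  then have "(max a b powr p) powr (1 / p) \<le> 1 powr (1 / p)" using p by (intro powr_mono2) auto
  then have "max a b \<le> 1" using p assms(2,3) by (simp add: powr_powr)
  then show ?thesis using min by (simp add: min_def max_def split: if_splits)
qed

lemma abs_linear_le_of_unit_ball:
  fixes k :: "'a::real_normed_vector \<Rightarrow> real"
  assumes lin: "linear k" and less: "\<And>v. norm v \<le> 1 \<Longrightarrow> k v < e"
  shows "\<bar>k v\<bar> \<le> e * norm v"
proof (cases "v = 0")
  case True
  then show ?thesis using linear_0[OF lin] by simp
next
  case False
  have "k (sgn v) < e" "k (- sgn v) < e" using less by (simp_all add: norm_sgn False)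
  moreover have "k (sgn v) = k v / norm v" using lin by (simp add: sgn_div_norm linear_scale divide_inverse mult.commute)
  ultimately have "\<bar>k v / norm v\<bar> \<le> e" using linear_neg[OF lin, of "sgn v"] by auto
  then show ?thesis using False by (simp add: abs_div pos_divide_le_eq mult.commute)
qed

text \<open>A functional of norm at most 1 on the p-sum that almost peaks at a unit vector of the first
  factor is small on the second factor: perturbing the peak point by s v raises the p-norm only
  to order s^p, while the functional changes by s h(0, v).\<close>
lemma norm_sump_peak_small_snd:
  assumes p: "1 < p" and "0 < \<epsilon>" and h: "h \<in> dual_ball (norm_sump p)" and x: "norm x = 1"
    and peak: "1 - (\<epsilon> / 2) powr (p / (p - 1)) < h (x, 0)"
  shows "\<bar>h (0, v)\<bar> \<le> \<epsilon> * norm v"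
proof -
  have lin: "linear h" and bd: "\<And>w. \<bar>h w\<bar> \<le> norm_sump p w"
    using h dual_ball_iff[OF homogeneous_gauge_norm_sump[of p]] p by auto
  define s where "s = (\<epsilon> / 2) powr (1 / (p - 1))"
  have s: "0 < s" using \<open>0 < \<epsilon>\<close> unfolding s_def by simp
  have "s powr p = s * (\<epsilon> / 2)"
  proof -
    have "s powr p = s * s powr (p - 1)" using powr_add[of s 1 "p - 1"] s by simp
    also have "s powr (p - 1) = \<epsilon> / 2" using p \<open>0 < \<epsilon>\<close> unfolding s_def by (simp add: powr_powr)
    finally show ?thesis using s by simp
  qed
  moreover have "(\<epsilon> / 2) powr (p / (p - 1)) = s * (\<epsilon> / 2)"
  proof -
    have "p / (p - 1) = 1 / (p - 1) + 1" using p by (simp add: field_simps)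
    then show ?thesis using \<open>0 < \<epsilon>\<close> unfolding s_def by (simp add: powr_add)
  qed
  ultimately have peak': "1 - s powr p < h (x, 0)" using peak by simp
  show ?thesis
  proof (rule abs_linear_le_of_unit_ball[OF linear_compose[OF linear_Pair_zero_left lin, unfolded o_def]])
    fix v :: 'b assume v: "norm v \<le> 1"
    have "(s * norm v) powr p \<le> s powr p" using v s p by (intro powr_mono2) (auto simp: mult_left_le)
    have "h (x, 0) + s * h (0, v) = h (x, s *\<^sub>R v)"
      using linear_Pair_split[OF lin, of x "s *\<^sub>R v"] linear_scale[OF lin, of s "(0, v)"] by simp
    also have "\<dots> \<le> norm_sump p (x, s *\<^sub>R v)" using bd abs_ge_self order_trans by blast
    also have "\<dots> = (1 + (s * norm v) powr p) powr (1 / p)"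
      unfolding norm_sump_def using x s by simp
    also have "\<dots> \<le> (1 + (s * norm v) powr p) powr 1" using p by (intro powr_mono) auto
    also have "\<dots> \<le> 1 + s powr p" using \<open>(s * norm v) powr p \<le> s powr p\<close> by simp
    finally have "s * h (0, v) < s * \<epsilon>" using peak' \<open>s powr p = s * (\<epsilon> / 2)\<close> by linarith
    then show "h (0, v) < \<epsilon>" using s by simp
  qed
qed

lemma norm_sump_slice_bound:
  assumes p: "1 < p" and "0 < \<epsilon>" and x: "norm x = 1"
    and h: "h \<in> wstar_slice (norm_sump p) (x, 0) ((\<epsilon> / 2) powr (p / (p - 1)))"
  shows "\<bar>h (u, v)\<bar> \<le> norm u + \<epsilon> * norm v"
proof -
  have hb: "h \<in> dual_ball (norm_sump p)" and peak: "1 - (\<epsilon> / 2) powr (p / (p - 1)) < h (x, 0)"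
    using h unfolding wstar_slice_def by auto
  have lin: "linear h" and bd: "\<And>w. \<bar>h w\<bar> \<le> norm_sump p w"
    using hb dual_ball_iff[OF homogeneous_gauge_norm_sump[of p]] p by auto
  have "\<bar>h (u, 0)\<bar> \<le> norm u" using bd[of "(u, 0)"] p by (simp add: norm_sump_Pair_zero)
  then show ?thesis
    using linear_Pair_split[OF lin, of u v] norm_sump_peak_small_snd[OF p \<open>0 < \<epsilon>\<close> hb x peak, of v]
    by linarith
qed

lemma wstar_slice_norm_sump_swap:
  assumes "0 < p" and "h \<in> wstar_slice (norm_sump p) z \<alpha>"
  shows "(\<lambda>w. h (prod.swap w)) \<in> wstar_slice (norm_sump p) (prod.swap z) \<alpha>"
  using assms dual_ball_comp_linear[OF homogeneous_gauge_norm_sump homogeneous_gauge_norm_sump _ linear_swap]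
  unfolding wstar_slice_def by (auto simp: norm_sump_swap)

lemma wstar_slice_norm_sump_nonempty:
  assumes "0 < p" "norm x = 1" "0 < \<alpha>"
  shows "wstar_slice (norm_sump p) (x, 0) \<alpha> \<noteq> {}"
proof -
  obtain f where "f \<in> dual_ball norm" "f x = 1" using norming_functional_in_dual_ball[of x] assms(2) by auto
  moreover from this(1) have "(\<lambda>w. f (fst w)) \<in> dual_ball (norm_sump p)"
    by (rule dual_ball_comp_linear[OF homogeneous_gauge_norm homogeneous_gauge_norm_sump[OF assms(1)] _
        linear_fst norm_fst_le_norm_sump[OF assms(1)]])
  ultimately show ?thesis using assms(3) unfolding wstar_slice_def by force
qed

lemma norm_sump_half_slices_diff_le:
  assumes p: "1 < p" and "0 < \<epsilon>" and x: "norm x = 1" and y: "norm y = 1"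
    and \<alpha>: "\<alpha> = (\<epsilon> / 2) powr (p / (p - 1))"
    and f0: "f0 \<in> wstar_slice (norm_sump p) (x, 0) \<alpha>" and g0: "g0 \<in> wstar_slice (norm_sump p) (x, 0) \<alpha>"
    and f1: "f1 \<in> wstar_slice (norm_sump p) (0, y) \<alpha>" and g1: "g1 \<in> wstar_slice (norm_sump p) (0, y) \<alpha>"
    and z: "norm_sump p (u, v) \<le> 1"
  shows "(f0 (u, v) - g0 (u, v)) / 2 + (f1 (u, v) - g1 (u, v)) / 2 \<le> (1 + \<epsilon>) * (1 + (1 / 2) powr (1 / p))"
proof -
  have "0 < p" using p by simp
  have first: "\<bar>k (u, v)\<bar> \<le> norm u + \<epsilon> * norm v" if "k \<in> wstar_slice (norm_sump p) (x, 0) \<alpha>" for k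
    using that unfolding \<alpha> by (rule norm_sump_slice_bound[OF p \<open>0 < \<epsilon>\<close> x])
  have second: "\<bar>k (u, v)\<bar> \<le> \<epsilon> * norm u + norm v" if "k \<in> wstar_slice (norm_sump p) (0, y) \<alpha>" for k
    using norm_sump_slice_bound[OF p \<open>0 < \<epsilon>\<close> y, of "\<lambda>w. k (prod.swap w)" v u]
      wstar_slice_norm_sump_swap[OF \<open>0 < p\<close> that] unfolding \<alpha> by simp
  have "norm u + norm v \<le> 1 + (1 / 2) powr (1 / p)"
    using add_le_of_powr_add_le_one[OF \<open>0 < p\<close> _ _ powr_add_le_one_of_norm_sump_le_one[OF \<open>0 < p\<close> z]]
    by simp
  then have "(1 + \<epsilon>) * (norm u + norm v) \<le> (1 + \<epsilon>) * (1 + (1 / 2) powr (1 / p))"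
    using \<open>0 < \<epsilon>\<close> by simp
  moreover have "(1 + \<epsilon>) * (norm u + norm v) = norm u + norm v + \<epsilon> * norm u + \<epsilon> * norm v"
    by (simp add: algebra_simps)
  ultimately show ?thesis
    using first[OF f0] first[OF g0] second[OF f1] second[OF g1] by argo
qed

theorem not_wstar_SD2P_norm_sump:
  assumes p: "1 < p" and X: "\<exists>x::'a::real_normed_vector. x \<noteq> 0" and Y: "\<exists>y::'b::real_normed_vector. y \<noteq> 0"
  shows "\<not> wstar_SD2P (norm_sump p :: 'a \<times> 'b \<Rightarrow> real)"
proof
  assume SD: "wstar_SD2P (norm_sump p :: 'a \<times> 'b \<Rightarrow> real)"
  have "0 < p" using p by simp
  obtain x0 :: 'a where x0: "norm x0 = 1" using exists_norm_one[OF X] by blast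
  obtain y0 :: 'b where y0: "norm y0 = 1" using exists_norm_one[OF Y] by blast
  define K where "K = 1 + (1 / 2 :: real) powr (1 / p)"
  have "(1 / 2 :: real) powr (1 / p) < 1 powr (1 / p)" using \<open>0 < p\<close> by (intro powr_less_mono2) auto
  then have K: "1 < K" "K < 2" unfolding K_def by auto
  define \<epsilon> where "\<epsilon> = (2 - K) / (2 * K)"
  have "0 < \<epsilon>" and K\<epsilon>: "(1 + \<epsilon>) * K < 2" using K unfolding \<epsilon>_def by (auto simp: field_simps)
  define \<alpha> where "\<alpha> = (\<epsilon> / 2) powr (p / (p - 1))"
  have "0 < \<alpha>" using \<open>0 < \<epsilon>\<close> unfolding \<alpha>_def by simp
  define zs where "zs i = (if i = 0 then (x0, 0) else (0, y0))" for i :: nat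
  have "norm_sump p (x0, 0::'b) = 1" "norm_sump p (0::'a, y0) = 1"
    using x0 y0 \<open>0 < p\<close> norm_sump_swap[of p "(0::'a, y0)"] by (simp_all add: norm_sump_Pair_zero)
  then have data: "convex_slice_data (norm_sump p) 2 (\<lambda>_. 1 / 2) zs (\<lambda>_. \<alpha>)"
    unfolding convex_slice_data_def zs_def using \<open>0 < \<alpha>\<close> by auto
  obtain k where "k \<in> wstar_slice (norm_sump p) (y0, 0::'a) \<alpha>"
    using wstar_slice_norm_sump_nonempty[OF \<open>0 < p\<close> y0 \<open>0 < \<alpha>\<close>] by blast
  then have "wstar_slice (norm_sump p) (0::'a, y0) \<alpha> \<noteq> {}"
    using wstar_slice_norm_sump_swap[OF \<open>0 < p\<close>] by fastforce
  then have "\<forall>i<2. wstar_slice (norm_sump p) (zs i) \<alpha> \<noteq> {}"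
    using wstar_slice_norm_sump_nonempty[OF \<open>0 < p\<close> x0 \<open>0 < \<alpha>\<close>]
    unfolding zs_def less_2_cases_iff by auto
  moreover have "0 < 2 - (1 + \<epsilon>) * K" using K\<epsilon> by simp
  ultimately obtain f g z
    where fg: "\<forall>i<2. f i \<in> wstar_slice (norm_sump p) (zs i) \<alpha> \<and> g i \<in> wstar_slice (norm_sump p) (zs i) \<alpha>"
      and z: "norm_sump p z \<le> 1"
      and far: "2 - (2 - (1 + \<epsilon>) * K) < (\<Sum>i<2. 1 / 2 * (f i z - g i z))"
    by (rule wstar_SD2P_witnesses[OF SD homogeneous_gauge_norm_sump[OF \<open>0 < p\<close>] data])
  obtain u v where uv: "z = (u, v)" by (cases z)
  have "f 0 \<in> wstar_slice (norm_sump p) (x0, 0) \<alpha>" "g 0 \<in> wstar_slice (norm_sump p) (x0, 0) \<alpha>"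
    and "f 1 \<in> wstar_slice (norm_sump p) (0, y0) \<alpha>" "g 1 \<in> wstar_slice (norm_sump p) (0, y0) \<alpha>"
    using fg[rule_format, of 0] fg[rule_format, of 1] unfolding zs_def by simp_all
  from norm_sump_half_slices_diff_le[OF p \<open>0 < \<epsilon>\<close> x0 y0 \<alpha>_def this z[unfolded uv]]
  have "(\<Sum>i<2. 1 / 2 * (f i z - g i z)) \<le> (1 + \<epsilon>) * K"
    unfolding uv K_def by (simp add: numeral_2_eq_2)
  then show False using far by simp
qed

theorem corollary4p10:
  assumes X_nontriv: "\<exists>x::'a::banach. x \<noteq> 0"
    and Y_nontriv: "\<exists>y::'b::banach. y \<noteq> 0"
  shows "(wstar_SD2P (norm :: 'a \<Rightarrow> real)
            \<longrightarrow> wstar_SD2P (norm_sum1 :: 'a \<times> 'b \<Rightarrow> real))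
       \<and> (\<forall>p::real. 1 < p \<longrightarrow> \<not> wstar_SD2P (norm_sump p :: 'a \<times> 'b \<Rightarrow> real))
       \<and> (wstar_SD2P (norm :: 'a \<Rightarrow> real) \<and> wstar_SD2P (norm :: 'b \<Rightarrow> real)
            \<longrightarrow> wstar_SD2P (norm_suminf :: 'a \<times> 'b \<Rightarrow> real))
       \<and> (wstar_SD2P (norm_suminf :: 'a \<times> 'b \<Rightarrow> real)
            \<longrightarrow> wstar_SD2P (norm :: 'a \<Rightarrow> real))"
  using wstar_SD2P_norm_sum1[OF _ X_nontriv, where 'b = 'b]
    not_wstar_SD2P_norm_sump[OF _ X_nontriv Y_nontriv]
    wstar_SD2P_norm_suminf[OF _ _ X_nontriv Y_nontriv]
    wstar_SD2P_of_norm_suminf[where 'a = 'a and 'b = 'b]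
  by blast

end
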